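(* There is a representation (unital $\mathbb C$-algebra homomorphism) $\overline{\mathcal H}\to\operatorname{Mat}_{2D}(\mathbb C)$ such that $\mathcal T\mapsto\mathfrak t$, $\mathcal T'\mapsto\mathfrak t'$, $\mathcal U\mapsto\mathfrak u$, $\mathcal U'\mapsto\mathfrak u'$, $\mathcal X\mapsto\mathfrak x$.
   Context: Let $q$ be a prime power, $D\ge3$ an integer and $e\in\{0,\tfrac12,1,\tfrac32,2\}$ (with $q$ a square when $e\in\{\tfrac12,\tfrac32\}$). Let $\kappa=q^{-e/2}$ and $\kappa'=\sqrt{-1}\,q^{-D/2}$. The nil-DAHA $\overline{\mathcal H}=\overline{\mathcal H}(\kappa,\kappa')$ is the $\mathbb C$-algebra generated by $\mathcal T^{\pm1},\mathcal U,\mathcal X^{\pm1}$ (with $\mathcal T\mathcal T^{-1}=\mathcal T^{-1}\mathcal T=1$, $\mathcal X\mathcal X^{-1}=\mathcal X^{-1}\mathcal X=1$) subject to $(\mathcal T-\kappa)(\mathcal T+\kappa^{-1})=0$, $(\mathcal T'-\kappa')(\mathcal T'+\kappa'^{-1})=0$, $\mathcal U(\mathcal U+1)=0$, $\mathcal U'^2=0$, where $\mathcal T'=\mathcal X\mathcal T^{-1}$ and $\mathcal U'=\mathcal X^{-1}(\mathcal U+1)$. Define $2\times2$ matrices: for $0\le i\le D-1$, $t(i)=\begin{pmatrix} q^{-e/2}-q^{e/2} & q^{e/2}\\ q^{-e/2}&0\end{pmatrix}$, $u'(i)=\begin{pmatrix}0&0\\ -\sqrt{-1}\,q^{(D-e)/2-i}&0\end{pmatrix}$;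 for $1\le i\le D-1$, $t'(i)=\sqrt{-1}\begin{pmatrix} q^{-D/2}(q^D-q^i+1) & q^{D/2}(q^{i-D}-1)\\ q^{-D/2}(1-q^i) & q^{i-D/2}\end{pmatrix}$, $u(i)=\begin{pmatrix}-1&1-q^{D-i}\\0&0\end{pmatrix}$; and $1\times1$ matrices $t'(0)=t'(D)=(\sqrt{-1}\,q^{-D/2})$, $u(0)=(0)$, $u(D)=(-1)$. Let $\mathfrak t=\operatorname{blockdiag}(t(0),\dots,t(D-1))$, $\mathfrak t'=\operatorname{blockdiag}(t'(0),\dots,t'(D))$, $\mathfrak u=\operatorname{blockdiag}(u(0),\dots,u(D))$, $\mathfrak u'=\operatorname{blockdiag}(u'(0),\dots,u'(D-1))$, all $2D\times2D$, and $\mathfrak x=\mathfrak t'\mathfrak t$. *)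

theory Defs
  imports Complex_Main "Jordan_Normal_Form.Matrix"
begin

text \<open>The nil-DAHA with parameters k, k' is presented by generators T, T^-1, U, X, X^-1
and the defining relations listed in the paper.  By the universal property of an algebra
given by generators and relations, a unital C-algebra homomorphism from it into the
n x n complex matrices is the same thing as an assignment of n x n matrices to the
generators T, T^-1, U, X, X^-1 that satisfies all defining relations.\<close>

definition nilDAHA_rep ::
  "nat \<Rightarrow> complex \<Rightarrow> complex \<Rightarrow> complex mat \<Rightarrow> complex mat \<Rightarrow> complex mat
     \<Rightarrow> complex mat \<Rightarrow> complex mat \<Rightarrow> bool" where
  "nilDAHA_rep n k k' T Ti U X Xi \<longleftrightarrow>
     T \<in> carrier_mat n n \<and> Ti \<in> carrier_mat n n \<and> U \<in> carrier_mat n n \<and>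
     X \<in> carrier_mat n n \<and> Xi \<in> carrier_mat n n \<and>
     T * Ti = 1\<^sub>m n \<and> Ti * T = 1\<^sub>m n \<and>
     X * Xi = 1\<^sub>m n \<and> Xi * X = 1\<^sub>m n \<and>
     (T - k \<cdot>\<^sub>m 1\<^sub>m n) * (T + inverse k \<cdot>\<^sub>m 1\<^sub>m n) = 0\<^sub>m n n \<and>
     (X * Ti - k' \<cdot>\<^sub>m 1\<^sub>m n) * (X * Ti + inverse k' \<cdot>\<^sub>m 1\<^sub>m n) = 0\<^sub>m n n \<and>
     U * (U + 1\<^sub>m n) = 0\<^sub>m n n \<and>
     (Xi * (U + 1\<^sub>m n)) * (Xi * (U + 1\<^sub>m n)) = 0\<^sub>m n n"

definition rep_T' :: "complex mat \<Rightarrow> complex mat \<Rightarrow> complex mat" where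
  "rep_T' X Ti = X * Ti"
definition rep_U' :: "nat \<Rightarrow> complex mat \<Rightarrow> complex mat \<Rightarrow> complex mat" where
  "rep_U' n Xi U = Xi * (U + 1\<^sub>m n)"

definition blockdiag_even :: "nat \<Rightarrow> (nat \<Rightarrow> nat \<Rightarrow> nat \<Rightarrow> complex) \<Rightarrow> complex mat" where
  "blockdiag_even D f = mat (2*D) (2*D)
     (\<lambda>(r,c). if r div 2 = c div 2 then f (r div 2) (r mod 2) (c mod 2) else 0)"

text \<open>Block diagonal 2D x 2D matrix with a 1 x 1 block (entry f0) at position 0,
2 x 2 blocks f i (1 \<le> i \<le> D-1) occupying rows/columns 2i-1, 2i, and a 1 x 1 block
(entry fD) at position 2D-1.\<close>
definition blockdiag_odd ::
  "nat \<Rightarrow> complex \<Rightarrow> (nat \<Rightarrow> nat \<Rightarrow> nat \<Rightarrow> complex) \<Rightarrow> complex \<Rightarrow> complex mat" where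
  "blockdiag_odd D f0 f fD = mat (2*D) (2*D)
     (\<lambda>(r,c). if (r+1) div 2 = (c+1) div 2 then
        (let i = (r+1) div 2 in
           if i = 0 then f0 else if i = D then fD else f i ((r+1) mod 2) ((c+1) mod 2))
      else 0)"

definition qp :: "nat \<Rightarrow> real \<Rightarrow> complex" where
  "qp q a = complex_of_real (real q powr a)"

definition entry2 :: "complex \<Rightarrow> complex \<Rightarrow> complex \<Rightarrow> complex \<Rightarrow> nat \<Rightarrow> nat \<Rightarrow> complex" where
  "entry2 m00 m01 m10 m11 a b =
     (if a = 0 then (if b = 0 then m00 else m01) else (if b = 0 then m10 else m11))"

definition t_blk :: "nat \<Rightarrow> real \<Rightarrow> nat \<Rightarrow> nat \<Rightarrow> nat \<Rightarrow> complex" where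
  "t_blk q e i = entry2 (qp q (-e/2) - qp q (e/2)) (qp q (e/2)) (qp q (-e/2)) 0"

definition u'_blk :: "nat \<Rightarrow> nat \<Rightarrow> real \<Rightarrow> nat \<Rightarrow> nat \<Rightarrow> nat \<Rightarrow> complex" where
  "u'_blk q D e i = entry2 0 0 (- \<i> * qp q ((real D - e)/2 - real i)) 0"

definition t'_blk :: "nat \<Rightarrow> nat \<Rightarrow> nat \<Rightarrow> nat \<Rightarrow> nat \<Rightarrow> complex" where
  "t'_blk q D i = (\<lambda>a b. \<i> * entry2
      (qp q (- real D/2) * (of_nat q ^ D - of_nat q ^ i + 1))
      (qp q (real D/2) * (qp q (real i - real D) - 1))
      (qp q (- real D/2) * (1 - of_nat q ^ i))
      (qp q (real i - real D/2)) a b)"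

definition u_blk :: "nat \<Rightarrow> nat \<Rightarrow> nat \<Rightarrow> nat \<Rightarrow> nat \<Rightarrow> complex" where
  "u_blk q D i = entry2 (-1) (1 - of_nat q ^ (D - i)) 0 0"

definition frak_t :: "nat \<Rightarrow> nat \<Rightarrow> real \<Rightarrow> complex mat" where
  "frak_t q D e = blockdiag_even D (t_blk q e)"

definition frak_u' :: "nat \<Rightarrow> nat \<Rightarrow> real \<Rightarrow> complex mat" where
  "frak_u' q D e = blockdiag_even D (u'_blk q D e)"

definition frak_t' :: "nat \<Rightarrow> nat \<Rightarrow> complex mat" where
  "frak_t' q D = blockdiag_odd D (\<i> * qp q (- real D/2)) (t'_blk q D) (\<i> * qp q (- real D/2))"

definition frak_u :: "nat \<Rightarrow> nat \<Rightarrow> complex mat" where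
  "frak_u q D = blockdiag_odd D 0 (u_blk q D) (-1)"

definition frak_x :: "nat \<Rightarrow> nat \<Rightarrow> real \<Rightarrow> complex mat" where
  "frak_x q D e = frak_t' q D * frak_t q D e"

definition prime_power :: "nat \<Rightarrow> bool" where
  "prime_power q \<longleftrightarrow> (\<exists>p k. prime p \<and> k \<ge> 1 \<and> q = p ^ k)"

end

theory Submission
  imports Defs
begin

(* All matrices in question are block diagonal: t and u' with 2 x 2 blocks on the diagonal, t' and u
   with the blocks shifted by one position and 1 x 1 corner blocks.  So every relation can be checked
   block by block.  Each block of t and t' has trace k - 1/k and determinant -1, hence satisfies the
   Hecke relation (T - k)(T + 1/k) = 0 and is inverted by T - (k - 1/k).  Taking X = t' t and
   X^-1 = t^-1 t'^-1 gives X T^-1 = T' at once, and X^-1 (U + 1) = u' reduces to X u' = U + 1, which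
   holds because t u' and t'^-1 (U + 1) are one and the same diagonal matrix. *)

lemma mult_mat_block_supported:
  fixes F G :: "nat \<Rightarrow> nat \<Rightarrow> 'a::semiring_0" and \<beta> :: "nat \<Rightarrow> nat"
  shows "mat n n (\<lambda>(r,c). if \<beta> r = \<beta> c then F r c else 0) *
         mat n n (\<lambda>(r,c). if \<beta> r = \<beta> c then G r c else 0) =
         mat n n (\<lambda>(r,c). if \<beta> r = \<beta> c then (\<Sum>k | k < n \<and> \<beta> k = \<beta> r. F r k * G k c) else 0)"
    (is "?F * ?G = ?P")
proof (rule eq_matI)
  fix r c assume "r < dim_row ?P" and "c < dim_col ?P"
  then have r: "r < n" and c: "c < n" by auto
  have "(\<Sum>k<n. (if \<beta> r = \<beta> k then F r k else 0) * (if \<beta> k = \<beta> c then G k c else 0))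
      = (\<Sum>k | k < n \<and> \<beta> k = \<beta> r. (if \<beta> r = \<beta> k then F r k else 0) * (if \<beta> k = \<beta> c then G k c else 0))"
    by (rule sum.mono_neutral_right) auto
  also have "\<dots> = (if \<beta> r = \<beta> c then (\<Sum>k | k < n \<and> \<beta> k = \<beta> r. F r k * G k c) else 0)"
    by (auto intro: sum.cong)
  finally show "(?F * ?G) $$ (r,c) = ?P $$ (r,c)"
    using r c by (simp add: scalar_prod_def atLeast0LessThan)
qed auto

lemma mult_right_inverse_mat:
  fixes A A' B B' :: "'a::semiring_1 mat"
  assumes "A \<in> carrier_mat n n" "B \<in> carrier_mat n n" "B' \<in> carrier_mat n n" "A' \<in> carrier_mat n n"
    and "B * B' = 1\<^sub>m n" and "A * A' = 1\<^sub>m n"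
  shows "A * B * (B' * A') = 1\<^sub>m n"
proof -
  have "A * B * (B' * A') = A * (B * B' * A')"
    using assms(1-4) by (simp add: assoc_mult_mat[of A n n B n "B' * A'" n])
  then show ?thesis
    using assms by simp
qed

lemma nilDAHA_rep_of_hecke_generators:
  fixes T Ti T' T'i U U' :: "complex mat"
  assumes carriers: "T \<in> carrier_mat n n" "Ti \<in> carrier_mat n n" "T' \<in> carrier_mat n n"
      "T'i \<in> carrier_mat n n" "U \<in> carrier_mat n n" "U' \<in> carrier_mat n n"
    and T_inv: "T * Ti = 1\<^sub>m n" "Ti * T = 1\<^sub>m n"
    and T'_inv: "T' * T'i = 1\<^sub>m n" "T'i * T' = 1\<^sub>m n"
    and T_hecke: "(T - k \<cdot>\<^sub>m 1\<^sub>m n) * (T + inverse k \<cdot>\<^sub>m 1\<^sub>m n) = 0\<^sub>m n n"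
    and T'_hecke: "(T' - k' \<cdot>\<^sub>m 1\<^sub>m n) * (T' + inverse k' \<cdot>\<^sub>m 1\<^sub>m n) = 0\<^sub>m n n"
    and U_rel: "U * (U + 1\<^sub>m n) = 0\<^sub>m n n"
    and U'_rel: "U' * U' = 0\<^sub>m n n"
    and X_U': "T' * T * U' = U + 1\<^sub>m n"
  shows "nilDAHA_rep n k k' T Ti U (T' * T) (Ti * T'i)
    \<and> rep_T' (T' * T) Ti = T' \<and> rep_U' n (Ti * T'i) U = U'"
proof -
  have XTi: "T' * T * Ti = T'"
    using carriers T_inv by simp
  have XXi: "T' * T * (Ti * T'i) = 1\<^sub>m n"
    using mult_right_inverse_mat[OF carriers(3,1,2,4) T_inv(1) T'_inv(1)] .
  have XiX: "Ti * T'i * (T' * T) = 1\<^sub>m n"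
    using mult_right_inverse_mat[OF carriers(2,4,3,1) T'_inv(2) T_inv(2)] .
  have "Ti * T'i * (T' * T * U') = Ti * T'i * (T' * T) * U'"
    using carriers by (simp add: assoc_mult_mat[of "Ti * T'i" n n "T' * T" n U' n])
  then have XiU: "Ti * T'i * (U + 1\<^sub>m n) = U'"
    using carriers XiX X_U' by simp
  show ?thesis
    unfolding nilDAHA_rep_def rep_T'_def rep_U'_def XTi XiU
    using carriers T_inv XXi XiX T_hecke T'_hecke U_rel U'_rel by auto
qed

(* Blocks are functions nat => nat => complex of which only the arguments 0 and 1 are read. *)
definition blk_mult ::
  "(nat \<Rightarrow> nat \<Rightarrow> complex) \<Rightarrow> (nat \<Rightarrow> nat \<Rightarrow> complex) \<Rightarrow> nat \<Rightarrow> nat \<Rightarrow> complex" where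
  "blk_mult M N a b = M a 0 * N 0 b + M a 1 * N 1 b"

definition blk_trace :: "(nat \<Rightarrow> nat \<Rightarrow> complex) \<Rightarrow> complex" where
  "blk_trace M = M 0 0 + M 1 1"

definition blk_det :: "(nat \<Rightarrow> nat \<Rightarrow> complex) \<Rightarrow> complex" where
  "blk_det M = M 0 0 * M 1 1 - M 0 1 * M 1 0"

lemma entry2_eq_iff:
  "entry2 a b c d = entry2 a' b' c' d' \<longleftrightarrow> a = a' \<and> b = b' \<and> c = c' \<and> d = d'"
proof
  assume "entry2 a b c d = entry2 a' b' c' d'"
  then have "entry2 a b c d x y = entry2 a' b' c' d' x y" for x y :: nat
    by simp
  from this[of 0 0] this[of 0 1] this[of 1 0] this[of 1 1]
  show "a = a' \<and> b = b' \<and> c = c' \<and> d = d'"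
    by (simp add: entry2_def)
qed simp

lemma entry2_mult:
  "blk_mult (entry2 a b c d) (entry2 a' b' c' d') =
   entry2 (a * a' + b * c') (a * b' + b * d') (c * a' + d * c') (c * b' + d * d')"
  by (simp add: fun_eq_iff blk_mult_def entry2_def)

lemma entry2_add:
  "(\<lambda>x y. entry2 a b c d x y + entry2 a' b' c' d' x y) = entry2 (a + a') (b + b') (c + c') (d + d')"
  by (simp add: fun_eq_iff entry2_def)

lemma entry2_diff:
  "(\<lambda>x y. entry2 a b c d x y - entry2 a' b' c' d' x y) = entry2 (a - a') (b - b') (c - c') (d - d')"
  by (simp add: fun_eq_iff entry2_def)

lemma entry2_smult: "(\<lambda>x y. k * entry2 a b c d x y) = entry2 (k * a) (k * b) (k * c) (k * d)"
  by (simp add: fun_eq_iff entry2_def)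

(* Cayley-Hamilton: a 2 x 2 block with trace k - 1/k and determinant -1 has eigenvalues k and -1/k,
   so it satisfies the Hecke relation and is inverted by M - (k - 1/k).  The method is called by its
   qualified name because HOL-Algebra, loaded by Jordan_Normal_Form, redefines algebra. *)
lemma entry2_hecke:
  fixes k m00 m01 m10 m11 :: complex
  assumes k: "k \<noteq> 0" and tr: "m00 + m11 = k - inverse k" and det: "m00 * m11 - m01 * m10 = -1"
  shows "blk_mult (entry2 (m00 - k) m01 m10 (m11 - k))
           (entry2 (m00 + inverse k) m01 m10 (m11 + inverse k)) = entry2 0 0 0 0"
    and "blk_mult (entry2 m00 m01 m10 m11)
           (entry2 (m00 - (k - inverse k)) m01 m10 (m11 - (k - inverse k))) = entry2 1 0 0 1"
    and "blk_mult (entry2 (m00 - (k - inverse k)) m01 m10 (m11 - (k - inverse k)))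
           (entry2 m00 m01 m10 m11) = entry2 1 0 0 1"
proof -
  have "k * inverse k = 1" using k by simp
  with tr det show "blk_mult (entry2 (m00 - k) m01 m10 (m11 - k))
           (entry2 (m00 + inverse k) m01 m10 (m11 + inverse k)) = entry2 0 0 0 0"
    unfolding entry2_mult entry2_eq_iff by (intro conjI; Groebner_Basis.algebra)
  from tr det show "blk_mult (entry2 m00 m01 m10 m11)
           (entry2 (m00 - (k - inverse k)) m01 m10 (m11 - (k - inverse k))) = entry2 1 0 0 1"
    and "blk_mult (entry2 (m00 - (k - inverse k)) m01 m10 (m11 - (k - inverse k)))
           (entry2 m00 m01 m10 m11) = entry2 1 0 0 1"
    unfolding entry2_mult entry2_eq_iff by (intro conjI; Groebner_Basis.algebra)+
qed

lemma blockdiag_even_mult: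
  "blockdiag_even D f * blockdiag_even D g = blockdiag_even D (\<lambda>i. blk_mult (f i) (g i))"
proof -
  have block: "{k. k < 2*D \<and> k div 2 = r div 2} = {2 * (r div 2), 2 * (r div 2) + 1}" if "r < 2*D" for r :: nat
    using that by auto presburger+
  show ?thesis
    unfolding blockdiag_even_def mult_mat_block_supported
    by (rule cong_mat) (auto simp: block blk_mult_def)
qed

lemma blockdiag_odd_mult:
  "blockdiag_odd D f0 f fD * blockdiag_odd D g0 g gD =
   blockdiag_odd D (f0 * g0) (\<lambda>i. blk_mult (f i) (g i)) (fD * gD)"
proof -
  have block: "{k. k < 2*D \<and> Suc k div 2 = j} =
      (if j = 0 then {0} else if j = D then {2*D - 1} else {2*j - 1, 2*j})"
    if "j = Suc r div 2" "r < 2*D" for r j :: nat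
    using that by auto
  show ?thesis
    unfolding blockdiag_odd_def Let_def mult_mat_block_supported
    by (rule cong_mat) (auto simp: block blk_mult_def)
qed

lemma blockdiag_even_carrier: "blockdiag_even D f \<in> carrier_mat (2*D) (2*D)"
  by (simp add: blockdiag_even_def)

lemma blockdiag_odd_carrier: "blockdiag_odd D f0 f fD \<in> carrier_mat (2*D) (2*D)"
  by (simp add: blockdiag_odd_def)

lemma blockdiag_even_cong:
  "(\<And>i. i < D \<Longrightarrow> f i = g i) \<Longrightarrow>
   blockdiag_even D f = blockdiag_even D g"
  unfolding blockdiag_even_def by (rule cong_mat) auto

lemma blockdiag_odd_cong:
  "f0 = g0 \<Longrightarrow> fD = gD \<Longrightarrow> (\<And>i. 0 < i \<Longrightarrow> i < D \<Longrightarrow> f i = g i) \<Longrightarrow>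
   blockdiag_odd D f0 f fD = blockdiag_odd D g0 g gD"
  unfolding blockdiag_odd_def Let_def by (rule cong_mat) auto

lemma zero_mat_blockdiag_even: "0\<^sub>m (2*D) (2*D) = blockdiag_even D (\<lambda>_. entry2 0 0 0 0)"
  by (rule eq_matI) (auto simp: blockdiag_even_def entry2_def)

lemma zero_mat_blockdiag_odd: "0\<^sub>m (2*D) (2*D) = blockdiag_odd D 0 (\<lambda>_. entry2 0 0 0 0) 0"
  by (rule eq_matI) (auto simp: blockdiag_odd_def Let_def entry2_def)

lemma blockdiag_even_add:
  "blockdiag_even D f + blockdiag_even D g = blockdiag_even D (\<lambda>i a b. f i a b + g i a b)"
  by (rule eq_matI) (auto simp: blockdiag_even_def)

lemma blockdiag_even_diff:
  "blockdiag_even D f - blockdiag_even D g = blockdiag_even D (\<lambda>i a b. f i a b - g i a b)"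
  by (rule eq_matI) (auto simp: blockdiag_even_def)

lemma blockdiag_even_smult: "k \<cdot>\<^sub>m blockdiag_even D f = blockdiag_even D (\<lambda>i a b. k * f i a b)"
  by (rule eq_matI) (auto simp: blockdiag_even_def)

lemma blockdiag_odd_add:
  "blockdiag_odd D f0 f fD + blockdiag_odd D g0 g gD =
   blockdiag_odd D (f0 + g0) (\<lambda>i a b. f i a b + g i a b) (fD + gD)"
  by (rule eq_matI) (auto simp: blockdiag_odd_def Let_def)

lemma blockdiag_odd_diff:
  "blockdiag_odd D f0 f fD - blockdiag_odd D g0 g gD =
   blockdiag_odd D (f0 - g0) (\<lambda>i a b. f i a b - g i a b) (fD - gD)"
  by (rule eq_matI) (auto simp: blockdiag_odd_def Let_def)

lemma blockdiag_odd_smult: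
  "k \<cdot>\<^sub>m blockdiag_odd D f0 f fD = blockdiag_odd D (k * f0) (\<lambda>i a b. k * f i a b) (k * fD)"
  by (rule eq_matI) (auto simp: blockdiag_odd_def Let_def)

lemma nat_eq_by_div_mod_2: "(x::nat) div 2 = y div 2 \<Longrightarrow> x mod 2 = y mod 2 \<Longrightarrow> x = y"
  by (metis div_mult_mod_eq)

lemma one_mat_blockdiag_even: "1\<^sub>m (2*D) = blockdiag_even D (\<lambda>_. entry2 1 0 0 1)"
  by (rule eq_matI) (auto simp: blockdiag_even_def entry2_def dest: nat_eq_by_div_mod_2)

lemma one_mat_blockdiag_odd: "1\<^sub>m (2*D) = blockdiag_odd D 1 (\<lambda>_. entry2 1 0 0 1) 1"
  by (rule eq_matI)
    (auto simp: blockdiag_odd_def Let_def entry2_def dest: nat_eq_by_div_mod_2[of "Suc _" "Suc _"])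

definition diagonal_mat_of :: "nat \<Rightarrow> (nat \<Rightarrow> complex) \<Rightarrow> complex mat" where
  "diagonal_mat_of n d = mat n n (\<lambda>(r,c). if r = c then d r else 0)"

lemma diagonal_mat_of_blockdiag_even:
  "diagonal_mat_of (2*D) d = blockdiag_even D (\<lambda>i. entry2 (d (2*i)) 0 0 (d (2*i + 1)))"
proof -
  have odd: "j mod 2 = Suc 0 \<Longrightarrow> Suc (2 * (j div 2)) = j" for j :: nat
    by presburger
  show ?thesis
    by (rule eq_matI)
      (auto simp: blockdiag_even_def diagonal_mat_of_def entry2_def odd dest: nat_eq_by_div_mod_2)
qed

lemma diagonal_mat_of_blockdiag_odd:
  "diagonal_mat_of (2*D) d = blockdiag_odd D (d 0) (\<lambda>i. entry2 (d (2*i - 1)) 0 0 (d (2*i))) (d (2*D - 1))"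
proof -
  have first: "Suc j div 2 = 0 \<Longrightarrow> j = 0"
    and last: "j < 2 * (Suc j div 2) \<Longrightarrow> 2 * (Suc j div 2) - Suc 0 = j"
    and even: "Suc j mod 2 = Suc 0 \<Longrightarrow> 2 * (Suc j div 2) = j" for j :: nat
    by presburger+
  show ?thesis
    by (intro eq_matI) (auto simp: blockdiag_odd_def diagonal_mat_of_def Let_def entry2_def last even
        dest: first nat_eq_by_div_mod_2[of "Suc _" "Suc _"])
qed

lemma blockdiag_even_entry2:
  "blockdiag_even D f = blockdiag_even D (\<lambda>i. entry2 (f i 0 0) (f i 0 1) (f i 1 0) (f i 1 1))"
  unfolding blockdiag_even_def by (rule cong_mat) (auto simp: entry2_def not_mod_2_eq_0_eq_1)

lemma blockdiag_odd_entry2: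
  "blockdiag_odd D f0 f fD = blockdiag_odd D f0 (\<lambda>i. entry2 (f i 0 0) (f i 0 1) (f i 1 0) (f i 1 1)) fD"
  unfolding blockdiag_odd_def Let_def by (rule cong_mat) (auto simp: entry2_def not_mod_2_eq_0_eq_1)

lemma blockdiag_even_hecke:
  fixes k :: complex
  assumes k: "k \<noteq> 0"
    and tr: "\<And>i. i < D \<Longrightarrow> blk_trace (f i) = k - inverse k"
    and det: "\<And>i. i < D \<Longrightarrow> blk_det (f i) = -1"
  defines "B \<equiv> blockdiag_even D f"
  shows "(B - k \<cdot>\<^sub>m 1\<^sub>m (2*D)) * (B + inverse k \<cdot>\<^sub>m 1\<^sub>m (2*D)) = 0\<^sub>m (2*D) (2*D)"
    and "B * (B - (k - inverse k) \<cdot>\<^sub>m 1\<^sub>m (2*D)) = 1\<^sub>m (2*D)"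
    and "(B - (k - inverse k) \<cdot>\<^sub>m 1\<^sub>m (2*D)) * B = 1\<^sub>m (2*D)"
  unfolding B_def blockdiag_even_entry2[of D f] one_mat_blockdiag_even zero_mat_blockdiag_even
    blockdiag_even_smult blockdiag_even_diff blockdiag_even_add blockdiag_even_mult
    entry2_smult entry2_diff entry2_add
  using k tr det by (auto simp: blk_trace_def blk_det_def intro!: blockdiag_even_cong entry2_hecke)

lemma blockdiag_odd_hecke:
  fixes k :: complex
  assumes k: "k \<noteq> 0"
    and tr: "\<And>i. 0 < i \<Longrightarrow> i < D \<Longrightarrow> blk_trace (f i) = k - inverse k"
    and det: "\<And>i. 0 < i \<Longrightarrow> i < D \<Longrightarrow> blk_det (f i) = -1"
  defines "B \<equiv> blockdiag_odd D k f k"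
  shows "(B - k \<cdot>\<^sub>m 1\<^sub>m (2*D)) * (B + inverse k \<cdot>\<^sub>m 1\<^sub>m (2*D)) = 0\<^sub>m (2*D) (2*D)"
    and "B * (B - (k - inverse k) \<cdot>\<^sub>m 1\<^sub>m (2*D)) = 1\<^sub>m (2*D)"
    and "(B - (k - inverse k) \<cdot>\<^sub>m 1\<^sub>m (2*D)) * B = 1\<^sub>m (2*D)"
  unfolding B_def blockdiag_odd_entry2[of D k f k] one_mat_blockdiag_odd zero_mat_blockdiag_odd
    blockdiag_odd_smult blockdiag_odd_diff blockdiag_odd_add blockdiag_odd_mult
    entry2_smult entry2_diff entry2_add
  using k tr det by (auto simp: blk_trace_def blk_det_def intro!: blockdiag_odd_cong entry2_hecke)

lemma qp_add: "0 < q \<Longrightarrow> qp q (x + y) = qp q x * qp q y"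
  by (simp add: qp_def powr_add)

lemma qp_diff: "0 < q \<Longrightarrow> qp q (x - y) = qp q x / qp q y"
  by (simp add: qp_def powr_diff)

lemma qp_minus: "0 < q \<Longrightarrow> qp q (- x) = inverse (qp q x)"
  by (simp add: qp_def powr_minus)

lemma qp_of_nat: "0 < q \<Longrightarrow> qp q (real n) = of_nat q ^ n"
  by (simp add: qp_def powr_realpow)

lemma qp_nonzero: "0 < q \<Longrightarrow> qp q x \<noteq> 0"
  by (simp add: qp_def)

lemma qp_half_squared: "0 < q \<Longrightarrow> qp q (real n / 2) * qp q (real n / 2) = of_nat q ^ n"
  by (simp add: qp_add[symmetric] qp_of_nat)

lemma t_blk_trace_det:
  assumes "0 < q"
  shows "blk_trace (t_blk q e i) = qp q (-e/2) - inverse (qp q (-e/2))"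
    and "blk_det (t_blk q e i) = -1"
  using qp_minus[OF assms, of "e/2"] qp_nonzero[OF assms, of "e/2"]
  by (simp_all add: t_blk_def blk_trace_def blk_det_def entry2_def)

lemma t'_blk_trace_det:
  assumes q: "0 < q"
  shows "blk_trace (t'_blk q D i) = \<i> * qp q (- real D/2) - inverse (\<i> * qp q (- real D/2))"
    and "blk_det (t'_blk q D i) = -1"
proof -
  define s where "s = qp q (real D / 2)"
  have s: "s \<noteq> 0" "qp q (- real D / 2) = inverse s" "of_nat q ^ D = s * s"
    using qp_nonzero[OF q] qp_minus[OF q, of "real D / 2"] qp_half_squared[OF q, of D]
    by (simp_all add: s_def)
  have w: "qp q (real i - real D) = of_nat q ^ i / (s * s)" "qp q (real i - real D / 2) = of_nat q ^ i / s"
    using s by (simp_all add: qp_diff[OF q] qp_of_nat[OF q] s_def)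
  show "blk_trace (t'_blk q D i) = \<i> * qp q (- real D/2) - inverse (\<i> * qp q (- real D/2))"
    unfolding t'_blk_def blk_trace_def entry2_def s(2) w using s by (simp add: field_simps)
  show "blk_det (t'_blk q D i) = -1"
    unfolding t'_blk_def blk_det_def entry2_def s(2,3) w s_def[symmetric] using s by (simp add: field_simps)
qed

lemma frak_t_hecke:
  fixes q D :: nat and e :: real
  assumes "0 < q"
  defines "k \<equiv> qp q (-e/2)"
  shows "(frak_t q D e - k \<cdot>\<^sub>m 1\<^sub>m (2*D)) * (frak_t q D e + inverse k \<cdot>\<^sub>m 1\<^sub>m (2*D))
           = 0\<^sub>m (2*D) (2*D)"
    and "frak_t q D e * (frak_t q D e - (k - inverse k) \<cdot>\<^sub>m 1\<^sub>m (2*D)) = 1\<^sub>m (2*D)"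
    and "(frak_t q D e - (k - inverse k) \<cdot>\<^sub>m 1\<^sub>m (2*D)) * frak_t q D e = 1\<^sub>m (2*D)"
  unfolding frak_t_def k_def
  using blockdiag_even_hecke[OF _ t_blk_trace_det[OF assms(1)]] qp_nonzero[OF assms(1)] by simp_all

lemma frak_t'_hecke:
  fixes q D :: nat
  assumes "0 < q"
  defines "k \<equiv> \<i> * qp q (- real D/2)"
  shows "(frak_t' q D - k \<cdot>\<^sub>m 1\<^sub>m (2*D)) * (frak_t' q D + inverse k \<cdot>\<^sub>m 1\<^sub>m (2*D))
           = 0\<^sub>m (2*D) (2*D)"
    and "frak_t' q D * (frak_t' q D - (k - inverse k) \<cdot>\<^sub>m 1\<^sub>m (2*D)) = 1\<^sub>m (2*D)"
    and "(frak_t' q D - (k - inverse k) \<cdot>\<^sub>m 1\<^sub>m (2*D)) * frak_t' q D = 1\<^sub>m (2*D)"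
  unfolding frak_t'_def k_def
  using blockdiag_odd_hecke[OF _ t'_blk_trace_det[OF assms(1)]] qp_nonzero[OF assms(1)] by simp_all

lemma frak_u_relation: "frak_u q D * (frak_u q D + 1\<^sub>m (2*D)) = 0\<^sub>m (2*D) (2*D)"
  unfolding frak_u_def u_blk_def one_mat_blockdiag_odd zero_mat_blockdiag_odd
    blockdiag_odd_add blockdiag_odd_mult entry2_add entry2_mult
  by (rule blockdiag_odd_cong) (simp_all add: entry2_eq_iff)

lemma frak_u'_square: "frak_u' q D e * frak_u' q D e = 0\<^sub>m (2*D) (2*D)"
  unfolding frak_u'_def u'_blk_def zero_mat_blockdiag_even blockdiag_even_mult entry2_mult
  by (rule blockdiag_even_cong) (simp add: entry2_eq_iff)

(* The common value of t u' and t'^-1 (u + 1). *)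
definition frak_d :: "nat \<Rightarrow> nat \<Rightarrow> complex mat" where
  "frak_d q D = diagonal_mat_of (2*D) (\<lambda>r. if even r then - \<i> * qp q (real D/2 - real (r div 2)) else 0)"

lemma frak_t_mult_frak_u':
  assumes q: "0 < q"
  shows "frak_t q D e * frak_u' q D e = frak_d q D"
proof -
  have "qp q (e/2) * qp q ((real D - e)/2 - real i) = qp q (real D/2 - real i)" for i :: nat
    by (simp add: qp_add[OF q, symmetric] field_simps)
  then show ?thesis
    unfolding frak_t_def frak_u'_def frak_d_def diagonal_mat_of_blockdiag_even blockdiag_even_mult
      t_blk_def u'_blk_def entry2_mult
    by (intro blockdiag_even_cong) (simp add: entry2_eq_iff)
qed

lemma frak_t'_mult_frak_d:
  assumes q: "0 < q" and D: "0 < D"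
  shows "frak_t' q D * frak_d q D = frak_u q D + 1\<^sub>m (2*D)"
proof -
  define s where "s = qp q (real D / 2)"
  have s: "s \<noteq> 0" "qp q (- real D / 2) * s = 1" "of_nat q ^ D = s * s"
    using qp_nonzero[OF q] qp_minus[OF q, of "real D / 2"] qp_half_squared[OF q, of D]
    by (simp_all add: s_def)
  have odd: "odd (2 * i - 1)" if "0 < i" for i :: nat
    using that by presburger
  have i_mult_i: "\<i> * x * (\<i> * y) = - (x * y)" for x y :: complex
    by (simp add: algebra_simps)
  have "qp q (real D / 2) * (qp q (real i - real D) - 1) * qp q (real D / 2 - real i) = 1 - of_nat q ^ (D - i)"
    and "qp q (real i - real D / 2) * qp q (real D / 2 - real i) = 1" if "i < D" for i
  proof -
    have w: "of_nat q ^ D = of_nat q ^ i * (of_nat q ^ (D - i) :: complex)"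
      using that by (simp add: power_add[symmetric])
    show "qp q (real D / 2) * (qp q (real i - real D) - 1) * qp q (real D / 2 - real i) = 1 - of_nat q ^ (D - i)"
      using s w q unfolding qp_diff[OF q] qp_of_nat[OF q] s_def[symmetric] by (simp add: field_simps)
    show "qp q (real i - real D / 2) * qp q (real D / 2 - real i) = 1"
      using s q unfolding qp_diff[OF q] qp_of_nat[OF q] s_def[symmetric] by (simp add: field_simps)
  qed
  then show ?thesis
    unfolding frak_t'_def t'_blk_def frak_d_def diagonal_mat_of_blockdiag_odd frak_u_def u_blk_def
      one_mat_blockdiag_odd blockdiag_odd_add blockdiag_odd_mult entry2_smult entry2_add entry2_mult
    using s D odd by (intro blockdiag_odd_cong) (simp_all add: entry2_eq_iff s_def i_mult_i)
qed

lemma frak_x_mult_frak_u':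
  assumes "0 < q" and "0 < D"
  shows "frak_x q D e * frak_u' q D e = frak_u q D + 1\<^sub>m (2*D)"
proof -
  have carriers: "frak_t' q D \<in> carrier_mat (2*D) (2*D)" "frak_t q D e \<in> carrier_mat (2*D) (2*D)"
    "frak_u' q D e \<in> carrier_mat (2*D) (2*D)"
    by (simp_all add: frak_t'_def frak_t_def frak_u'_def blockdiag_even_carrier blockdiag_odd_carrier)
  have "frak_x q D e * frak_u' q D e = frak_t' q D * (frak_t q D e * frak_u' q D e)"
    unfolding frak_x_def using carriers by (rule assoc_mult_mat)
  also have "\<dots> = frak_u q D + 1\<^sub>m (2*D)"
    using assms by (simp add: frak_t_mult_frak_u' frak_t'_mult_frak_d)
  finally show ?thesis .
qed

theorem proposition8p7:
  fixes q D :: nat and e :: real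
  assumes "prime_power q"
    and "D \<ge> 3"
    and "e \<in> {0, 1/2, 1, 3/2, 2}"
    and "e \<in> {1/2, 3/2} \<Longrightarrow> (\<exists>m::nat. q = m ^ 2)"
  shows "\<exists>Ti Xi. nilDAHA_rep (2*D) (qp q (-e/2)) (\<i> * qp q (- real D/2))
              (frak_t q D e) Ti (frak_u q D) (frak_x q D e) Xi
          \<and> rep_T' (frak_x q D e) Ti = frak_t' q D
          \<and> rep_U' (2*D) Xi (frak_u q D) = frak_u' q D e"
proof -
  obtain p k where "prime p" "q = p ^ k"
    using assms(1) unfolding prime_power_def by blast
  then have q: "0 < q"
    by (metis not_prime_0 gr0I zero_less_power)
  have D: "0 < D"
    using assms(2) by simp
  have carriers: "frak_t q D e \<in> carrier_mat (2*D) (2*D)" "frak_t' q D \<in> carrier_mat (2*D) (2*D)"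
      "frak_u q D \<in> carrier_mat (2*D) (2*D)" "frak_u' q D e \<in> carrier_mat (2*D) (2*D)"
    by (simp_all add: frak_t_def frak_t'_def frak_u_def frak_u'_def
        blockdiag_even_carrier blockdiag_odd_carrier)
  note inverse_carrier = minus_carrier_mat[OF smult_carrier_mat[OF one_carrier_mat]]
  show ?thesis
    unfolding frak_x_def
    using nilDAHA_rep_of_hecke_generators[OF carriers(1) inverse_carrier carriers(2) inverse_carrier
        carriers(3,4) frak_t_hecke(2,3)[OF q] frak_t'_hecke(2,3)[OF q]
        frak_t_hecke(1)[OF q] frak_t'_hecke(1)[OF q]
        frak_u_relation frak_u'_square frak_x_mult_frak_u'[OF q D, unfolded frak_x_def]]
    by blast
qed

end
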